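(* Fix a real number $\beta>-1$. Let $\phi$ be an analytic self-map of $\mathbb{D}$ whose Denjoy–Wolff point lies on the unit circle $\mathbb{T}$. Then $C_\phi-I$ has dense range in $A^2_\beta$, where $C_\phi f=f\circ\phi$.
   Context: $\mathbb{D}$ is the open unit disc and $\mathbb{T}$ the unit circle. For $\beta>-1$, $A^2_\beta$ is the Hilbert space of analytic functions $f(z)=\sum_{n\ge0}\widehat f(n)z^n$ on $\mathbb{D}$ with inner product $\langle f,g\rangle=\sum_{n\ge0}\frac{n!\,\Gamma(2+\beta)}{\Gamma(n+2+\beta)}\widehat f(n)\overline{\widehat g(n)}$ (equivalently the $L^2$ inner product with respect to $(\beta+1)(1-|z|^2)^\beta dA(z)$); composition operators $C_\phi$ are bounded on it. If an analytic self-map $\phi$ of $\mathbb{D}$ is not an elliptic automorphism (an automorphism of $\mathbb{D}$ with a fixed point in $\mathbb{D}$), there is a unique $\omega\in\overline{\mathbb{D}}$ with $\lim_{n\to\infty}\phi^{[n]}(z)=\omega$ for all $z\in\mathbb{D}$ ($\phi^{[n]}$ the $n$-th iterate), called the Denjoy–Wolff point of $\phi$. *)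

theory Defs
  imports "HOL-Complex_Analysis.Complex_Analysis"
begin

definition taylor_coeff :: "(complex \<Rightarrow> complex) \<Rightarrow> nat \<Rightarrow> complex" where
  "taylor_coeff f n = (deriv ^^ n) f 0 / of_nat (fact n)"

definition bergman_weight :: "real \<Rightarrow> nat \<Rightarrow> real" where
  "bergman_weight \<beta> n = fact n * Gamma (2 + \<beta>) / Gamma (real n + 2 + \<beta>)"

definition bergman_norm2 :: "real \<Rightarrow> (complex \<Rightarrow> complex) \<Rightarrow> real" where
  "bergman_norm2 \<beta> f = (\<Sum>n. bergman_weight \<beta> n * (cmod (taylor_coeff f n))\<^sup>2)"

definition bergman_space :: "real \<Rightarrow> (complex \<Rightarrow> complex) set" where
  "bergman_space \<beta> = {f. f holomorphic_on ball 0 1 \<and>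
      summable (\<lambda>n. bergman_weight \<beta> n * (cmod (taylor_coeff f n))\<^sup>2)}"

definition denjoy_wolff_point :: "(complex \<Rightarrow> complex) \<Rightarrow> complex \<Rightarrow> bool" where
  "denjoy_wolff_point \<phi> \<omega> \<longleftrightarrow> cmod \<omega> \<le> 1 \<and>
      (\<forall>z\<in>ball 0 1. (\<lambda>n. (\<phi> ^^ n) z) \<longlonglongrightarrow> \<omega>)"

end

(* For |omega| = 1 every z^k - omega^k is a limit of coboundaries g o phi - g: the telescoping
   sums g = - (sum_{j<n} (phi^[j])^k) satisfy g o phi - g - (z^k - omega^k) = omega^k - (phi^[n])^k,
   which is bounded by 2 and tends to 0 pointwise on the disc. Such sequences tend to 0 in A^2_beta:
   their H^2 norms stay bounded, each Taylor coefficient tends to 0, and the weights of A^2_beta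
   tend to 0. Averaging the approximants of z^k - omega^k with weights conj(omega)^k / K,
   k = 1..K, approximates 1 up to a polynomial of norm at most 1/K. Hence all polynomials, and by
   density all of A^2_beta, lie in the closure of the range of C_phi - I.
   The H^2 bound and the convergence of the coefficients are obtained by sampling at N-th roots of
   unity, where a discrete Parseval identity for the truncated Taylor series replaces the mean of
   |f|^2 over circles. *)

theory Submission
  imports Defs "HOL-Real_Asymp.Real_Asymp"
begin

section \<open>Taylor coefficients\<close>

lemma taylor_coeff_power: "taylor_coeff (\<lambda>z. z ^ k) n = (if n = k then 1 else 0)"
proof -
  have "(deriv ^^ n) (\<lambda>w. (w - 0) ^ k) 0 = pochhammer (of_nat (Suc k - n)) n * (0 - 0) ^ (k - n)"
    by (rule higher_deriv_power)
  then show ?thesis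
    by (auto simp: taylor_coeff_def pochhammer_fact[symmetric] pochhammer_0_left)
qed

lemma taylor_coeff_const: "taylor_coeff (\<lambda>z. c) n = (if n = 0 then c else 0)"
  by (simp add: taylor_coeff_def)

lemma taylor_coeff_add:
  assumes "f holomorphic_on ball 0 1" "g holomorphic_on ball 0 1"
  shows "taylor_coeff (\<lambda>z. f z + g z) n = taylor_coeff f n + taylor_coeff g n"
  using higher_deriv_add[OF assms, of 0 n] by (simp add: taylor_coeff_def add_divide_distrib)

lemma taylor_coeff_diff:
  assumes "f holomorphic_on ball 0 1" "g holomorphic_on ball 0 1"
  shows "taylor_coeff (\<lambda>z. f z - g z) n = taylor_coeff f n - taylor_coeff g n"
  using higher_deriv_diff[OF assms, of 0 n] by (simp add: taylor_coeff_def diff_divide_distrib)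

lemma taylor_coeff_cmult:
  assumes "f holomorphic_on ball 0 1"
  shows "taylor_coeff (\<lambda>z. c * f z) n = c * taylor_coeff f n"
  using higher_deriv_cmult[OF assms, of 0 n c] by (simp add: taylor_coeff_def)

lemma taylor_coeff_sum:
  assumes "finite I" "\<And>i. i \<in> I \<Longrightarrow> f i holomorphic_on ball 0 1"
  shows "taylor_coeff (\<lambda>z. \<Sum>i\<in>I. f i z) n = (\<Sum>i\<in>I. taylor_coeff (f i) n)"
  using assms
proof (induction I rule: finite_induct)
  case empty
  then show ?case by (simp add: taylor_coeff_const)
next
  case (insert i I)
  then have "taylor_coeff (\<lambda>z. f i z + (\<Sum>i\<in>I. f i z)) n
      = taylor_coeff (f i) n + taylor_coeff (\<lambda>z. \<Sum>i\<in>I. f i z) n"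
    by (intro taylor_coeff_add) (auto intro!: holomorphic_intros)
  with insert show ?case by simp
qed

lemma taylor_coeff_polynomial:
  assumes "finite I"
  shows "taylor_coeff (\<lambda>z. \<Sum>k\<in>I. c k * z ^ k) m = (if m \<in> I then c m else 0)"
proof -
  have "taylor_coeff (\<lambda>z. \<Sum>k\<in>I. c k * z ^ k) m = (\<Sum>k\<in>I. c k * taylor_coeff (\<lambda>z. z ^ k) m)"
    using assms by (simp add: taylor_coeff_sum taylor_coeff_cmult holomorphic_intros)
  then show ?thesis
    using assms by (simp add: taylor_coeff_power if_distrib cong: if_cong)
qed

lemma taylor_coeff_sums:
  assumes "f holomorphic_on ball 0 1" "z \<in> ball 0 1"
  shows "(\<lambda>n. taylor_coeff f n * z ^ n) sums f z"
  using holomorphic_power_series[OF assms] by (simp add: taylor_coeff_def)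

lemma norm_taylor_coeff_le:
  assumes holf: "f holomorphic_on ball 0 1" and bd: "\<And>z. z \<in> ball 0 1 \<Longrightarrow> cmod (f z) \<le> M"
  shows "cmod (taylor_coeff f n) \<le> M"
proof -
  have le: "cmod (taylor_coeff f n) \<le> M / r ^ n" if r: "0 < r" "r < 1" for r
  proof -
    have "norm ((deriv ^^ n) f 0) \<le> fact n * M / r ^ n"
    proof (rule Cauchy_inequality)
      show "f holomorphic_on ball 0 r"
        by (rule holomorphic_on_subset[OF holf]) (use r in auto)
      have "f holomorphic_on cball 0 r"
        by (rule holomorphic_on_subset[OF holf]) (use r in auto)
      then show "continuous_on (cball 0 r) f"
        by (rule holomorphic_on_imp_continuous_on)
      show "cmod (f x) \<le> M" if "cmod (0 - x) = r" for x
        using that r by (intro bd) auto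
    qed (fact r)
    then show ?thesis
      unfolding taylor_coeff_def by (simp add: norm_divide field_simps)
  qed
  have "((\<lambda>r. M / r ^ n) \<longlongrightarrow> M / 1 ^ n) (at_left 1)"
    by (intro tendsto_intros) auto
  moreover have "eventually (\<lambda>r. cmod (taylor_coeff f n) \<le> M / r ^ n) (at_left 1)"
    using eventually_at_left_real[of 0 "1::real"] by (auto elim!: eventually_mono intro: le)
  ultimately show ?thesis
    using tendsto_le[OF trivial_limit_at_left_real _ tendsto_const] by simp
qed

lemma norm_taylor_remainder_le:
  assumes holf: "f holomorphic_on ball 0 1" and bd: "\<And>z. z \<in> ball 0 1 \<Longrightarrow> cmod (f z) \<le> M"
    and r: "0 \<le> r" "r < 1" and z: "cmod z \<le> r"
  shows "cmod (f z - (\<Sum>m<N. taylor_coeff f m * z ^ m)) \<le> M * r ^ N / (1 - r)"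
proof -
  have M: "0 \<le> M"
    using order_trans[OF norm_ge_zero bd[of 0]] by simp
  have "(\<lambda>i. taylor_coeff f (i + N) * z ^ (i + N)) sums (f z - (\<Sum>m<N. taylor_coeff f m * z ^ m))"
    using sums_split_initial_segment[OF taylor_coeff_sums[OF holf], of z N] z r by simp
  moreover have "(\<lambda>i. M * r ^ N * r ^ i) sums (M * r ^ N * (1 / (1 - r)))"
    by (intro sums_mult geometric_sums) (use r in auto)
  moreover have "cmod (taylor_coeff f (i + N) * z ^ (i + N)) \<le> M * r ^ N * r ^ i" for i
  proof -
    have "cmod (taylor_coeff f (i + N) * z ^ (i + N)) \<le> M * r ^ (i + N)"
      unfolding norm_mult norm_power
      using norm_taylor_coeff_le[OF holf bd] z M by (intro mult_mono power_mono) auto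
    then show ?thesis by (simp add: power_add mult_ac)
  qed
  ultimately show ?thesis
    using norm_suminf_le[of "\<lambda>i. taylor_coeff f (i + N) * z ^ (i + N)" "\<lambda>i. M * r ^ N * r ^ i"]
    by (simp add: sums_iff)
qed

section \<open>Sampling at roots of unity\<close>

definition unit_root :: "nat \<Rightarrow> nat \<Rightarrow> complex" where
  "unit_root N j = exp (2 * of_real pi * \<i> * of_nat j / of_nat N)"

lemma norm_unit_root [simp]: "cmod (unit_root N j) = 1"
  unfolding unit_root_def by (simp add: norm_exp_eq_Re)

lemma unit_root_power_commute: "unit_root N j ^ m = unit_root N m ^ j"
  unfolding unit_root_def exp_of_nat_mult[symmetric] by (simp add: mult_ac)

lemma sum_unit_root_orthogonal:
  assumes "N > 0" "m < N" "l < N"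
  shows "(\<Sum>j<N. unit_root N j ^ m * cnj (unit_root N j) ^ l) = (if m = l then of_nat N else 0)"
proof -
  define x where "x = unit_root N m * cnj (unit_root N l)"
  have pow: "unit_root N j ^ m * cnj (unit_root N j) ^ l = x ^ j" for j
    by (simp add: x_def unit_root_power_commute power_mult_distrib flip: complex_cnj_power)
  have "x = 1 \<longleftrightarrow> unit_root N m = unit_root N l"
  proof -
    have "cnj (unit_root N l) * unit_root N l = 1"
      using complex_norm_square[of "unit_root N l"] by (simp add: mult.commute)
    then show ?thesis
      unfolding x_def by (metis mult.assoc mult.commute mult.right_neutral)
  qed
  also have "\<dots> \<longleftrightarrow> m = l"
    using complex_root_unity_eq[of N m l] assms by (simp add: unit_root_def)
  finally have x1: "x = 1 \<longleftrightarrow> m = l" .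
  have xN: "x ^ N = 1"
    using complex_root_unity[of N m] complex_root_unity[of N l] assms
    by (simp add: x_def unit_root_def power_mult_distrib flip: complex_cnj_power)
  have "(\<Sum>j<N. unit_root N j ^ m * cnj (unit_root N j) ^ l) = (\<Sum>j<N. x ^ j)"
    by (rule sum.cong[OF refl pow])
  then show ?thesis
    using x1 xN geometric_sum[of x N] by (cases "m = l") auto
qed

lemma discrete_parseval:
  assumes "N > 0"
  shows "(\<Sum>j<N. (cmod (\<Sum>m<N. c m * unit_root N j ^ m))\<^sup>2) = real N * (\<Sum>m<N. (cmod (c m))\<^sup>2)"
proof -
  have "complex_of_real (\<Sum>j<N. (cmod (\<Sum>m<N. c m * unit_root N j ^ m))\<^sup>2)
      = (\<Sum>j<N. (\<Sum>m<N. c m * unit_root N j ^ m) * cnj (\<Sum>l<N. c l * unit_root N j ^ l))"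
    by (simp only: of_real_sum complex_norm_square)
  also have "\<dots> = (\<Sum>j<N. \<Sum>m<N. \<Sum>l<N. c m * cnj (c l) * (unit_root N j ^ m * cnj (unit_root N j) ^ l))"
    by (simp add: sum_product cnj_sum mult_ac)
  also have "\<dots> = (\<Sum>m<N. \<Sum>j<N. \<Sum>l<N. c m * cnj (c l) * (unit_root N j ^ m * cnj (unit_root N j) ^ l))"
    by (rule sum.swap)
  also have "\<dots> = (\<Sum>m<N. \<Sum>l<N. \<Sum>j<N. c m * cnj (c l) * (unit_root N j ^ m * cnj (unit_root N j) ^ l))"
    by (rule sum.cong[OF refl], rule sum.swap)
  also have "\<dots> = (\<Sum>m<N. \<Sum>l<N. c m * cnj (c l) * (\<Sum>j<N. unit_root N j ^ m * cnj (unit_root N j) ^ l))"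
    by (simp only: sum_distrib_left)
  also have "\<dots> = (\<Sum>m<N. \<Sum>l<N. c m * cnj (c l) * (if m = l then of_nat N else 0))"
    using assms by (intro sum.cong refl) (simp add: sum_unit_root_orthogonal)
  also have "\<dots> = (\<Sum>m<N. c m * cnj (c m) * of_nat N)"
    by (simp add: if_distrib cong: if_cong)
  also have "\<dots> = (\<Sum>m<N. of_nat N * complex_of_real ((cmod (c m))\<^sup>2))"
    by (intro sum.cong refl) (simp only: complex_norm_square mult_ac)
  also have "\<dots> = complex_of_real (real N * (\<Sum>m<N. (cmod (c m))\<^sup>2))"
    by (simp add: sum_distrib_left)
  finally show ?thesis
    by (simp only: of_real_eq_iff)
qed

lemma sum_sq_taylor_coeff_le_unit_root_average:
  assumes holf: "f holomorphic_on ball 0 1" and bd: "\<And>z. z \<in> ball 0 1 \<Longrightarrow> cmod (f z) \<le> M"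
    and r: "0 \<le> r" "r < 1" and N: "N > 0"
  shows "(\<Sum>m<N. (cmod (taylor_coeff f m) * r ^ m)\<^sup>2)
           \<le> (\<Sum>j<N. (cmod (f (of_real r * unit_root N j)) + M * r ^ N / (1 - r))\<^sup>2) / real N"
proof -
  define c where "c m = taylor_coeff f m * of_real r ^ m" for m
  have "(\<Sum>m<N. (cmod (taylor_coeff f m) * r ^ m)\<^sup>2) = (\<Sum>m<N. (cmod (c m))\<^sup>2)"
    unfolding c_def using r by (simp add: norm_mult norm_power)
  also have "\<dots> = (\<Sum>j<N. (cmod (\<Sum>m<N. c m * unit_root N j ^ m))\<^sup>2) / real N"
    using discrete_parseval[OF N, of c] N by (simp add: field_simps)
  also have "\<dots> \<le> (\<Sum>j<N. (cmod (f (of_real r * unit_root N j)) + M * r ^ N / (1 - r))\<^sup>2) / real N"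
  proof (intro divide_right_mono sum_mono power_mono)
    fix j
    define z where "z = of_real r * unit_root N j"
    have "(\<Sum>m<N. c m * unit_root N j ^ m) = (\<Sum>m<N. taylor_coeff f m * z ^ m)"
      by (simp add: c_def z_def power_mult_distrib mult.assoc)
    moreover have "cmod (f z - (\<Sum>m<N. taylor_coeff f m * z ^ m)) \<le> M * r ^ N / (1 - r)"
      using norm_taylor_remainder_le[OF holf bd r, of z N] r by (simp add: z_def norm_mult)
    ultimately show "cmod (\<Sum>m<N. c m * unit_root N j ^ m) \<le> cmod (f z) + M * r ^ N / (1 - r)"
      using norm_triangle_sub[of "\<Sum>m<N. taylor_coeff f m * z ^ m" "f z"]
      by (simp add: norm_minus_commute)
  qed auto
  finally show ?thesis .
qed

lemma norm_taylor_coeff_sq_le_unit_root_average: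
  assumes holf: "f holomorphic_on ball 0 1" and bd: "\<And>z. z \<in> ball 0 1 \<Longrightarrow> cmod (f z) \<le> M"
    and r: "0 \<le> r" "r < 1" and m: "m < N"
  shows "(cmod (taylor_coeff f m) * r ^ m)\<^sup>2
           \<le> (\<Sum>j<N. (cmod (f (of_real r * unit_root N j)) + M * r ^ N / (1 - r))\<^sup>2) / real N"
proof -
  have "(cmod (taylor_coeff f m) * r ^ m)\<^sup>2 \<le> (\<Sum>m<N. (cmod (taylor_coeff f m) * r ^ m)\<^sup>2)"
    using m by (intro member_le_sum) auto
  also have "\<dots> \<le> (\<Sum>j<N. (cmod (f (of_real r * unit_root N j)) + M * r ^ N / (1 - r))\<^sup>2) / real N"
    using m by (intro sum_sq_taylor_coeff_le_unit_root_average[OF holf bd r]) auto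
  finally show ?thesis .
qed

lemma sum_sq_taylor_coeff_radius_le:
  assumes holf: "f holomorphic_on ball 0 1" and bd: "\<And>z. z \<in> ball 0 1 \<Longrightarrow> cmod (f z) \<le> M"
    and r: "0 \<le> r" "r < 1"
  shows "(\<Sum>m<D. (cmod (taylor_coeff f m) * r ^ m)\<^sup>2) \<le> M\<^sup>2"
proof (rule LIMSEQ_le_const)
  show "(\<lambda>N. (M + M * r ^ N / (1 - r))\<^sup>2) \<longlonglongrightarrow> M\<^sup>2"
  proof -
    have "(\<lambda>N. (M + M * r ^ N / (1 - r))\<^sup>2) \<longlonglongrightarrow> (M + M * 0 / (1 - r))\<^sup>2"
      using r by (intro tendsto_intros LIMSEQ_power_zero) auto
    then show ?thesis by simp
  qed
  show "\<exists>N0. \<forall>N\<ge>N0. (\<Sum>m<D. (cmod (taylor_coeff f m) * r ^ m)\<^sup>2) \<le> (M + M * r ^ N / (1 - r))\<^sup>2"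
  proof (intro exI allI impI)
    fix N assume N: "Suc D \<le> N"
    have "(\<Sum>m<D. (cmod (taylor_coeff f m) * r ^ m)\<^sup>2) \<le> (\<Sum>m<N. (cmod (taylor_coeff f m) * r ^ m)\<^sup>2)"
      using N by (intro sum_mono2) auto
    also have "\<dots> \<le> (\<Sum>j<N. (cmod (f (of_real r * unit_root N j)) + M * r ^ N / (1 - r))\<^sup>2) / real N"
      using N by (intro sum_sq_taylor_coeff_le_unit_root_average[OF holf bd r]) auto
    also have "\<dots> \<le> (\<Sum>j<N. (M + M * r ^ N / (1 - r))\<^sup>2) / real N"
      using r order_trans[OF norm_ge_zero bd[of 0]]
      by (intro divide_right_mono sum_mono power_mono add_right_mono bd) (auto simp: norm_mult)
    also have "\<dots> = (M + M * r ^ N / (1 - r))\<^sup>2"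
      using N by simp
    finally show "(\<Sum>m<D. (cmod (taylor_coeff f m) * r ^ m)\<^sup>2) \<le> (M + M * r ^ N / (1 - r))\<^sup>2" .
  qed
qed

lemma sum_sq_taylor_coeff_le:
  assumes holf: "f holomorphic_on ball 0 1" and bd: "\<And>z. z \<in> ball 0 1 \<Longrightarrow> cmod (f z) \<le> M"
  shows "(\<Sum>m<D. (cmod (taylor_coeff f m))\<^sup>2) \<le> M\<^sup>2"
proof -
  have "((\<lambda>r. \<Sum>m<D. (cmod (taylor_coeff f m) * r ^ m)\<^sup>2)
      \<longlongrightarrow> (\<Sum>m<D. (cmod (taylor_coeff f m) * 1 ^ m)\<^sup>2)) (at_left 1)"
    by (intro tendsto_intros)
  moreover have "eventually (\<lambda>r. (\<Sum>m<D. (cmod (taylor_coeff f m) * r ^ m)\<^sup>2) \<le> M\<^sup>2) (at_left 1)"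
    using eventually_at_left_real[of 0 "1::real"]
    by (auto elim!: eventually_mono intro: sum_sq_taylor_coeff_radius_le[OF holf bd])
  ultimately show ?thesis
    using tendsto_le[OF trivial_limit_at_left_real tendsto_const] by simp
qed

lemma eventually_norm_taylor_coeff_less:
  assumes holf: "\<And>n. h n holomorphic_on ball 0 1"
    and bd: "\<And>n z. z \<in> ball 0 1 \<Longrightarrow> cmod (h n z) \<le> M"
    and lim: "\<And>z. z \<in> ball 0 1 \<Longrightarrow> (\<lambda>n. h n z) \<longlonglongrightarrow> 0"
    and r: "0 \<le> r" "r < 1" and N: "m < N" and T: "M * r ^ N / (1 - r) < \<delta>"
  shows "eventually (\<lambda>n. cmod (taylor_coeff (h n) m) * r ^ m < \<delta>) sequentially"
proof -
  define T where "T = M * r ^ N / (1 - r)"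
  have "0 \<le> M"
    using order_trans[OF norm_ge_zero bd[of 0 0]] by simp
  then have T0: "0 \<le> T"
    unfolding T_def using r by simp
  have "(\<lambda>n. cmod (h n (of_real r * unit_root N j))) \<longlonglongrightarrow> 0" for j
    using r by (intro tendsto_norm_zero lim) (simp add: norm_mult)
  then have "(\<lambda>n. (\<Sum>j<N. (cmod (h n (of_real r * unit_root N j)) + T)\<^sup>2) / real N)
      \<longlonglongrightarrow> (\<Sum>j<N. (0 + T)\<^sup>2) / real N"
    using N by (intro tendsto_divide tendsto_const tendsto_sum tendsto_power tendsto_add) auto
  also have "(\<Sum>j<N. (0 + T)\<^sup>2) / real N = T\<^sup>2"
    using N by simp
  finally have "(\<lambda>n. (\<Sum>j<N. (cmod (h n (of_real r * unit_root N j)) + T)\<^sup>2) / real N)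
      \<longlonglongrightarrow> T\<^sup>2" .
  moreover have "T\<^sup>2 < \<delta>\<^sup>2"
    using T T0 unfolding T_def[symmetric] by (intro power_strict_mono) auto
  ultimately have "eventually (\<lambda>n. (\<Sum>j<N. (cmod (h n (of_real r * unit_root N j)) + T)\<^sup>2) / real N < \<delta>\<^sup>2)
      sequentially"
    by (rule order_tendstoD(2))
  then show ?thesis
  proof (rule eventually_mono)
    fix n
    assume avg: "(\<Sum>j<N. (cmod (h n (of_real r * unit_root N j)) + T)\<^sup>2) / real N < \<delta>\<^sup>2"
    have "(cmod (taylor_coeff (h n) m) * r ^ m)\<^sup>2 \<le> (\<Sum>j<N. (cmod (h n (of_real r * unit_root N j)) + T)\<^sup>2) / real N"
      unfolding T_def using r N by (intro norm_taylor_coeff_sq_le_unit_root_average[OF holf bd])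
    then have "(cmod (taylor_coeff (h n) m) * r ^ m)\<^sup>2 < \<delta>\<^sup>2"
      using avg by (rule le_less_trans)
    moreover have "0 \<le> \<delta>"
      using T0 T unfolding T_def[symmetric] by simp
    ultimately show "cmod (taylor_coeff (h n) m) * r ^ m < \<delta>"
      by (rule power2_less_imp_less)
  qed
qed

lemma taylor_coeff_tendsto_zero:
  assumes holf: "\<And>n. h n holomorphic_on ball 0 1"
    and bd: "\<And>n z. z \<in> ball 0 1 \<Longrightarrow> cmod (h n z) \<le> M"
    and lim: "\<And>z. z \<in> ball 0 1 \<Longrightarrow> (\<lambda>n. h n z) \<longlonglongrightarrow> 0"
  shows "(\<lambda>n. taylor_coeff (h n) m) \<longlonglongrightarrow> 0"
proof (rule tendstoI)
  fix \<epsilon> :: real assume "\<epsilon> > 0"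
  define r :: real where "r = 1 / 2"
  have "(\<lambda>N. M * r ^ N / (1 - r)) \<longlonglongrightarrow> M * 0 / (1 - r)"
    unfolding r_def by (intro tendsto_intros LIMSEQ_power_zero) auto
  then have "eventually (\<lambda>N. M * r ^ N / (1 - r) < \<epsilon> * r ^ m) sequentially"
    by (rule order_tendstoD(2)) (use \<open>\<epsilon> > 0\<close> in \<open>simp add: r_def\<close>)
  then obtain N0 where N0: "\<And>N. N \<ge> N0 \<Longrightarrow> M * r ^ N / (1 - r) < \<epsilon> * r ^ m"
    unfolding eventually_sequentially by blast
  define N where "N = max N0 (Suc m)"
  have N: "m < N" "N0 \<le> N"
    unfolding N_def by auto
  then have "eventually (\<lambda>n. cmod (taylor_coeff (h n) m) * r ^ m < \<epsilon> * r ^ m) sequentially"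
    using N0[OF N(2)] by (intro eventually_norm_taylor_coeff_less[OF holf bd lim]) (auto simp: r_def)
  then show "eventually (\<lambda>n. dist (taylor_coeff (h n) m) 0 < \<epsilon>) sequentially"
    by (rule eventually_mono) (simp add: r_def)
qed

section \<open>The weighted Bergman space\<close>

lemma fact_le_pochhammer:
  assumes "(1::real) \<le> a"
  shows "fact n \<le> pochhammer a n"
proof (induction n)
  case 0
  then show ?case by simp
next
  case (Suc n)
  have "fact (Suc n) = (real n + 1) * (fact n :: real)"
    by (simp add: algebra_simps)
  also have "\<dots> \<le> (a + real n) * pochhammer a n"
    using Suc assms by (intro mult_mono) auto
  also have "\<dots> = pochhammer a (Suc n)"
    by (simp add: pochhammer_Suc)
  finally show ?case .
qed

lemma bergman_weight_eq_pochhammer: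
  assumes "\<beta> > -1"
  shows "bergman_weight \<beta> n = fact n / pochhammer (2 + \<beta>) n"
proof -
  have "2 + \<beta> \<notin> \<int>\<^sub>\<le>\<^sub>0"
    using assms nonpos_Ints_nonpos by fastforce
  then have "pochhammer (2 + \<beta>) n = Gamma (2 + \<beta> + of_nat n) / Gamma (2 + \<beta>)"
    by (rule pochhammer_Gamma)
  moreover have "Gamma (2 + \<beta>) > 0"
    using assms by simp
  ultimately have "Gamma (real n + 2 + \<beta>) = Gamma (2 + \<beta>) * pochhammer (2 + \<beta>) n"
    by (simp add: field_simps add_ac)
  then show ?thesis
    unfolding bergman_weight_def using \<open>Gamma (2 + \<beta>) > 0\<close> by simp
qed

lemma bergman_weight_pos: "\<beta> > -1 \<Longrightarrow> bergman_weight \<beta> n > 0"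
  unfolding bergman_weight_def by simp

lemma bergman_weight_le_one:
  assumes "\<beta> > -1"
  shows "bergman_weight \<beta> n \<le> 1"
proof -
  have "fact n \<le> pochhammer (2 + \<beta>) n"
    using assms by (intro fact_le_pochhammer) auto
  moreover have "pochhammer (2 + \<beta>) n > 0"
    using assms by (intro pochhammer_pos) auto
  ultimately show ?thesis
    using bergman_weight_eq_pochhammer[OF assms] by simp
qed

text \<open>Gauss's product formula for \<open>\<Gamma>\<close> shows that the weight behaves like
  \<open>\<Gamma>(2+\<beta>) n\<^sup>-\<^sup>1\<^sup>-\<^sup>\<beta>\<close>.\<close>
lemma bergman_weight_tendsto_zero:
  assumes "\<beta> > -1"
  shows "bergman_weight \<beta> \<longlonglongrightarrow> 0"
proof -
  define a where "a = 2 + \<beta>"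
  have a: "a > 1"
    using assms by (simp add: a_def)
  have "bergman_weight \<beta> n = Gamma_series a n * ((a + real n) / exp (a * ln (real n)))"
    if "n > 0" for n
  proof -
    have "pochhammer a n > 0"
      using a by (intro pochhammer_pos) auto
    then show ?thesis
      using that a unfolding bergman_weight_eq_pochhammer[OF assms] Gamma_series_def a_def[symmetric]
      by (simp add: pochhammer_Suc)
  qed
  then have "eventually (\<lambda>n. Gamma_series a n * ((a + real n) / exp (a * ln (real n)))
      = bergman_weight \<beta> n) sequentially"
    unfolding eventually_sequentially by (intro exI[of _ 1]) auto
  moreover have "(\<lambda>n. (a + real n) / exp (a * ln (real n))) \<longlonglongrightarrow> 0"
    using a by real_asymp
  then have "(\<lambda>n. Gamma_series a n * ((a + real n) / exp (a * ln (real n)))) \<longlonglongrightarrow> Gamma a * 0"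
    by (intro tendsto_mult Gamma_series_LIMSEQ)
  ultimately show ?thesis
    using Lim_transform_eventually by fastforce
qed

lemma summable_sq_taylor_coeff:
  assumes "f holomorphic_on ball 0 1" "\<And>z. z \<in> ball 0 1 \<Longrightarrow> cmod (f z) \<le> M"
  shows "summable (\<lambda>n. (cmod (taylor_coeff f n))\<^sup>2)"
    and "(\<Sum>n. (cmod (taylor_coeff f n))\<^sup>2) \<le> M\<^sup>2"
proof -
  show s: "summable (\<lambda>n. (cmod (taylor_coeff f n))\<^sup>2)"
    by (rule summableI_nonneg_bounded) (use sum_sq_taylor_coeff_le[OF assms] in auto)
  show "(\<Sum>n. (cmod (taylor_coeff f n))\<^sup>2) \<le> M\<^sup>2"
    by (rule suminf_le_const[OF s]) (use sum_sq_taylor_coeff_le[OF assms] in auto)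
qed

lemma bergman_space_if_norm_le:
  assumes "\<beta> > -1" "f holomorphic_on ball 0 1" "\<And>z. z \<in> ball 0 1 \<Longrightarrow> cmod (f z) \<le> M"
  shows "f \<in> bergman_space \<beta>"
proof -
  have "norm (bergman_weight \<beta> n * (cmod (taylor_coeff f n))\<^sup>2) \<le> (cmod (taylor_coeff f n))\<^sup>2" for n
    using bergman_weight_pos[OF assms(1)] bergman_weight_le_one[OF assms(1)]
    by (simp add: abs_mult mult_left_le_one_le less_imp_le)
  then have "summable (\<lambda>n. bergman_weight \<beta> n * (cmod (taylor_coeff f n))\<^sup>2)"
    by (blast intro: summable_comparison_test'[OF summable_sq_taylor_coeff(1)[OF assms(2,3)]])
  then show ?thesis
    unfolding bergman_space_def using assms(2) by simp
qed

lemma bergman_norm2_nonneg: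
  assumes "\<beta> > -1" "f \<in> bergman_space \<beta>"
  shows "bergman_norm2 \<beta> f \<ge> 0"
  unfolding bergman_norm2_def
  by (intro suminf_nonneg)
     (use assms(2) in \<open>auto simp: bergman_space_def less_imp_le[OF bergman_weight_pos[OF assms(1)]]\<close>)

lemma bergman_norm2_le_initial_segment:
  assumes \<beta>: "\<beta> > -1" and holf: "f holomorphic_on ball 0 1"
    and bd: "\<And>z. z \<in> ball 0 1 \<Longrightarrow> cmod (f z) \<le> M"
    and c: "\<And>m. m \<ge> D \<Longrightarrow> bergman_weight \<beta> m \<le> c"
  shows "bergman_norm2 \<beta> f \<le> (\<Sum>m<D. bergman_weight \<beta> m * (cmod (taylor_coeff f m))\<^sup>2) + c * M\<^sup>2"
proof -
  define w where "w = bergman_weight \<beta>"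
  define b where "b m = (cmod (taylor_coeff f m))\<^sup>2" for m
  have b: "summable b" "suminf b \<le> M\<^sup>2"
    using summable_sq_taylor_coeff[OF holf bd] unfolding b_def by auto
  have "0 < w D" "w D \<le> c"
    using bergman_weight_pos[OF \<beta>] c[of D] unfolding w_def by auto
  then have "0 \<le> c" by linarith
  have le: "w m * b m \<le> (if m \<in> {..<D} then w m * b m else 0) + c * b m" for m
    using \<open>0 \<le> c\<close> c[of m] by (auto simp: w_def b_def intro: mult_right_mono)
  have sums: "(\<lambda>m. (if m \<in> {..<D} then w m * b m else 0) + c * b m) sums ((\<Sum>m<D. w m * b m) + c * suminf b)"
    by (intro sums_add sums_If_finite_set sums_mult summable_sums b) simp
  have "summable (\<lambda>m. w m * b m)"
    using bergman_space_if_norm_le[OF \<beta> holf bd]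
    unfolding bergman_space_def w_def b_def by simp
  then have "bergman_norm2 \<beta> f \<le> (\<Sum>m. (if m \<in> {..<D} then w m * b m else 0) + c * b m)"
    unfolding bergman_norm2_def w_def[symmetric] b_def[symmetric]
    using le sums by (intro suminf_le) (auto simp: sums_iff)
  also have "\<dots> = (\<Sum>m<D. w m * b m) + c * suminf b"
    using sums by (simp add: sums_iff)
  also have "\<dots> \<le> (\<Sum>m<D. w m * b m) + c * M\<^sup>2"
    using \<open>0 \<le> c\<close> b by (intro add_left_mono mult_left_mono) auto
  finally show ?thesis
    unfolding w_def b_def .
qed

lemma bergman_norm2_tendsto_zero:
  assumes \<beta>: "\<beta> > -1" and holf: "\<And>n. h n holomorphic_on ball 0 1"
    and bd: "\<And>n z. z \<in> ball 0 1 \<Longrightarrow> cmod (h n z) \<le> M"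
    and lim: "\<And>z. z \<in> ball 0 1 \<Longrightarrow> (\<lambda>n. h n z) \<longlonglongrightarrow> 0"
  shows "(\<lambda>n. bergman_norm2 \<beta> (h n)) \<longlonglongrightarrow> 0"
proof (rule order_tendstoI)
  fix a :: real assume "a < 0"
  then show "eventually (\<lambda>n. a < bergman_norm2 \<beta> (h n)) sequentially"
    using bergman_norm2_nonneg[OF \<beta> bergman_space_if_norm_le[OF \<beta> holf bd]]
    by (intro always_eventually) (auto intro: less_le_trans)
next
  fix \<epsilon> :: real assume \<epsilon>: "\<epsilon> > 0"
  define c where "c = \<epsilon> / (2 * (M\<^sup>2 + 1))"
  have "c > 0" "c * M\<^sup>2 < \<epsilon> / 2"
    using \<epsilon> by (auto simp: c_def field_simps add_pos_nonneg)
  obtain D where D: "\<And>m. m \<ge> D \<Longrightarrow> bergman_weight \<beta> m \<le> c"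
    using order_tendstoD(2)[OF bergman_weight_tendsto_zero[OF \<beta>] \<open>c > 0\<close>]
    unfolding eventually_sequentially by (meson less_imp_le)
  have "(\<lambda>n. \<Sum>m<D. bergman_weight \<beta> m * (cmod (taylor_coeff (h n) m))\<^sup>2)
      \<longlonglongrightarrow> (\<Sum>m<D. bergman_weight \<beta> m * (cmod 0)\<^sup>2)"
    by (intro tendsto_sum tendsto_mult tendsto_const tendsto_power tendsto_norm
        taylor_coeff_tendsto_zero[OF holf bd lim])
  then have "eventually (\<lambda>n. (\<Sum>m<D. bergman_weight \<beta> m * (cmod (taylor_coeff (h n) m))\<^sup>2) < \<epsilon> / 2)
      sequentially"
    using \<epsilon> by (intro order_tendstoD(2)) auto
  then show "eventually (\<lambda>n. bergman_norm2 \<beta> (h n) < \<epsilon>) sequentially"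
  proof (rule eventually_mono)
    fix n
    assume "(\<Sum>m<D. bergman_weight \<beta> m * (cmod (taylor_coeff (h n) m))\<^sup>2) < \<epsilon> / 2"
    moreover have "bergman_norm2 \<beta> (h n)
        \<le> (\<Sum>m<D. bergman_weight \<beta> m * (cmod (taylor_coeff (h n) m))\<^sup>2) + c * M\<^sup>2"
      by (rule bergman_norm2_le_initial_segment[OF \<beta> holf bd D])
    ultimately show "bergman_norm2 \<beta> (h n) < \<epsilon>"
      using \<open>c * M\<^sup>2 < \<epsilon> / 2\<close> by linarith
  qed
qed

lemma bergman_norm2_polynomial:
  assumes "finite I"
  shows "bergman_norm2 \<beta> (\<lambda>z. \<Sum>k\<in>I. c k * z ^ k) = (\<Sum>k\<in>I. bergman_weight \<beta> k * (cmod (c k))\<^sup>2)"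
proof -
  have "bergman_norm2 \<beta> (\<lambda>z. \<Sum>k\<in>I. c k * z ^ k)
      = (\<Sum>m. bergman_weight \<beta> m * (cmod (if m \<in> I then c m else 0))\<^sup>2)"
    unfolding bergman_norm2_def taylor_coeff_polynomial[OF assms] ..
  also have "\<dots> = (\<Sum>m\<in>I. bergman_weight \<beta> m * (cmod (if m \<in> I then c m else 0))\<^sup>2)"
    using assms by (intro suminf_finite) auto
  finally show ?thesis
    by simp
qed

lemma bergman_norm2_taylor_remainder_tendsto_zero:
  assumes "f \<in> bergman_space \<beta>"
  shows "(\<lambda>K. bergman_norm2 \<beta> (\<lambda>z. f z - (\<Sum>k<K. taylor_coeff f k * z ^ k))) \<longlonglongrightarrow> 0"
proof -
  define s where "s m = bergman_weight \<beta> m * (cmod (taylor_coeff f m))\<^sup>2" for m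
  have f: "f holomorphic_on ball 0 1" and s: "summable s"
    using assms unfolding bergman_space_def s_def by auto
  have "bergman_norm2 \<beta> (\<lambda>z. f z - (\<Sum>k<K. taylor_coeff f k * z ^ k)) = suminf s - (\<Sum>m<K. s m)" for K
  proof -
    have "(\<lambda>m. bergman_weight \<beta> m * (cmod (taylor_coeff (\<lambda>z. f z - (\<Sum>k<K. taylor_coeff f k * z ^ k)) m))\<^sup>2)
        = (\<lambda>m. s m - (if m \<in> {..<K} then s m else 0))"
      using f by (auto simp: taylor_coeff_diff taylor_coeff_polynomial s_def holomorphic_intros)
    moreover have "(\<lambda>m. s m - (if m \<in> {..<K} then s m else 0)) sums (suminf s - (\<Sum>m<K. s m))"
      by (intro sums_diff summable_sums s sums_If_finite_set finite_lessThan)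
    ultimately show ?thesis
      unfolding bergman_norm2_def by (simp add: sums_iff)
  qed
  moreover have "(\<lambda>K. suminf s - (\<Sum>m<K. s m)) \<longlonglongrightarrow> suminf s - suminf s"
    by (intro tendsto_diff tendsto_const summable_LIMSEQ s)
  ultimately show ?thesis
    by simp
qed

lemma norm_add_sq_le: "(cmod (a + b))\<^sup>2 \<le> 2 * (cmod a)\<^sup>2 + 2 * (cmod b)\<^sup>2"
proof -
  have "(cmod (a + b))\<^sup>2 \<le> (cmod a + cmod b)\<^sup>2"
    by (intro power_mono norm_triangle_ineq) auto
  also have "\<dots> \<le> 2 * (cmod a)\<^sup>2 + 2 * (cmod b)\<^sup>2"
    using zero_le_power2[of "cmod a - cmod b"] by (simp add: power2_eq_square algebra_simps)
  finally show ?thesis .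
qed

lemma bergman_space_add:
  assumes \<beta>: "\<beta> > -1" and f: "f \<in> bergman_space \<beta>" and g: "g \<in> bergman_space \<beta>"
  shows "(\<lambda>z. f z + g z) \<in> bergman_space \<beta>"
    and "bergman_norm2 \<beta> (\<lambda>z. f z + g z) \<le> 2 * bergman_norm2 \<beta> f + 2 * bergman_norm2 \<beta> g"
proof -
  define w where "w = bergman_weight \<beta>"
  define sf where "sf n = w n * (cmod (taylor_coeff f n))\<^sup>2" for n
  define sg where "sg n = w n * (cmod (taylor_coeff g n))\<^sup>2" for n
  have hf: "f holomorphic_on ball 0 1" and hg: "g holomorphic_on ball 0 1"
    and sf: "summable sf" and sg: "summable sg"
    using f g unfolding bergman_space_def sf_def sg_def w_def by auto
  have le: "w n * (cmod (taylor_coeff (\<lambda>z. f z + g z) n))\<^sup>2 \<le> 2 * sf n + 2 * sg n" for n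
    using mult_left_mono[OF norm_add_sq_le less_imp_le[OF bergman_weight_pos[OF \<beta>]]]
    unfolding taylor_coeff_add[OF hf hg] sf_def sg_def w_def by (simp add: algebra_simps)
  have s2: "summable (\<lambda>n. 2 * sf n + 2 * sg n)"
    by (intro summable_add summable_mult sf sg)
  have s: "summable (\<lambda>n. w n * (cmod (taylor_coeff (\<lambda>z. f z + g z) n))\<^sup>2)"
    by (rule summable_comparison_test'[OF s2, of 0])
       (use le bergman_weight_pos[OF \<beta>] in \<open>auto simp: w_def less_imp_le\<close>)
  then show "(\<lambda>z. f z + g z) \<in> bergman_space \<beta>"
    unfolding bergman_space_def w_def using hf hg by (auto intro!: holomorphic_intros)
  have "bergman_norm2 \<beta> (\<lambda>z. f z + g z) \<le> (\<Sum>n. 2 * sf n + 2 * sg n)"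
    unfolding bergman_norm2_def w_def[symmetric] by (rule suminf_le[OF le s s2])
  also have "\<dots> = 2 * bergman_norm2 \<beta> f + 2 * bergman_norm2 \<beta> g"
    unfolding bergman_norm2_def w_def[symmetric] sf_def[symmetric] sg_def[symmetric]
    using sf sg by (simp add: suminf_add[symmetric] suminf_mult summable_mult)
  finally show "bergman_norm2 \<beta> (\<lambda>z. f z + g z) \<le> 2 * bergman_norm2 \<beta> f + 2 * bergman_norm2 \<beta> g" .
qed

lemma bergman_space_cmult:
  assumes f: "f \<in> bergman_space \<beta>"
  shows "(\<lambda>z. c * f z) \<in> bergman_space \<beta>"
    and "bergman_norm2 \<beta> (\<lambda>z. c * f z) = (cmod c)\<^sup>2 * bergman_norm2 \<beta> f"
proof -
  have hf: "f holomorphic_on ball 0 1"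
    and sf: "summable (\<lambda>n. bergman_weight \<beta> n * (cmod (taylor_coeff f n))\<^sup>2)"
    using f unfolding bergman_space_def by auto
  have eq: "(\<lambda>n. bergman_weight \<beta> n * (cmod (taylor_coeff (\<lambda>z. c * f z) n))\<^sup>2)
      = (\<lambda>n. (cmod c)\<^sup>2 * (bergman_weight \<beta> n * (cmod (taylor_coeff f n))\<^sup>2))"
    by (simp add: taylor_coeff_cmult[OF hf] norm_mult power_mult_distrib mult_ac)
  have "summable (\<lambda>n. bergman_weight \<beta> n * (cmod (taylor_coeff (\<lambda>z. c * f z) n))\<^sup>2)"
    unfolding eq by (intro summable_mult sf)
  then show "(\<lambda>z. c * f z) \<in> bergman_space \<beta>"
    unfolding bergman_space_def using hf by (auto intro!: holomorphic_intros)
  show "bergman_norm2 \<beta> (\<lambda>z. c * f z) = (cmod c)\<^sup>2 * bergman_norm2 \<beta> f"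
    unfolding bergman_norm2_def eq by (rule suminf_mult[OF sf])
qed

lemma bergman_space_diff:
  assumes "\<beta> > -1" "f \<in> bergman_space \<beta>" "g \<in> bergman_space \<beta>"
  shows "(\<lambda>z. f z - g z) \<in> bergman_space \<beta>"
  using bergman_space_add(1)[OF assms(1,2) bergman_space_cmult(1)[OF assms(3), of "-1"]] by simp

lemma bergman_norm2_minus_commute:
  assumes "f holomorphic_on ball 0 1" "g holomorphic_on ball 0 1"
  shows "bergman_norm2 \<beta> (\<lambda>z. f z - g z) = bergman_norm2 \<beta> (\<lambda>z. g z - f z)"
  unfolding bergman_norm2_def using assms by (simp add: taylor_coeff_diff norm_minus_commute)

section \<open>Bounded holomorphic functions\<close>

definition bounded_holomorphic :: "(complex \<Rightarrow> complex) \<Rightarrow> bool" where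
  "bounded_holomorphic g \<longleftrightarrow> g holomorphic_on ball 0 1 \<and> (\<exists>M. \<forall>z\<in>ball 0 1. cmod (g z) \<le> M)"

lemma bounded_holomorphic_add:
  assumes "bounded_holomorphic f" "bounded_holomorphic g"
  shows "bounded_holomorphic (\<lambda>z. f z + g z)"
proof -
  obtain M N where "\<forall>z\<in>ball 0 1. cmod (f z) \<le> M" "\<forall>z\<in>ball 0 1. cmod (g z) \<le> N"
    using assms unfolding bounded_holomorphic_def by blast
  then have "\<forall>z\<in>ball 0 1. cmod (f z + g z) \<le> M + N"
    by (meson add_mono norm_triangle_le)
  then show ?thesis
    using assms unfolding bounded_holomorphic_def by (auto intro!: holomorphic_intros)
qed

lemma bounded_holomorphic_cmult:
  assumes "bounded_holomorphic f"
  shows "bounded_holomorphic (\<lambda>z. c * f z)"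
proof -
  obtain M where "\<forall>z\<in>ball 0 1. cmod (f z) \<le> M"
    using assms unfolding bounded_holomorphic_def by blast
  then have "\<forall>z\<in>ball 0 1. cmod (c * f z) \<le> cmod c * M"
    by (simp add: norm_mult mult_left_mono)
  then show ?thesis
    using assms unfolding bounded_holomorphic_def by (auto intro!: holomorphic_intros)
qed

lemma bounded_holomorphic_const: "bounded_holomorphic (\<lambda>z. c)"
  unfolding bounded_holomorphic_def by auto

lemma bounded_holomorphic_sum:
  "finite I \<Longrightarrow> (\<And>i. i \<in> I \<Longrightarrow> bounded_holomorphic (f i)) \<Longrightarrow> bounded_holomorphic (\<lambda>z. \<Sum>i\<in>I. f i z)"
  by (induction I rule: finite_induct) (auto intro: bounded_holomorphic_add bounded_holomorphic_const)

lemma bounded_holomorphic_compose: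
  assumes "bounded_holomorphic g" "\<psi> holomorphic_on ball 0 1" "\<psi> ` ball 0 1 \<subseteq> ball 0 1"
  shows "bounded_holomorphic (\<lambda>z. g (\<psi> z))"
proof -
  obtain M where "g holomorphic_on ball 0 1" "\<forall>z\<in>ball 0 1. cmod (g z) \<le> M"
    using assms(1) unfolding bounded_holomorphic_def by blast
  moreover have "(g \<circ> \<psi>) holomorphic_on ball 0 1"
    using holomorphic_on_compose_gen assms(2,3) calculation(1) by blast
  ultimately show ?thesis
    using assms(3) unfolding bounded_holomorphic_def o_def by blast
qed

lemma bounded_holomorphic_power: "bounded_holomorphic (\<lambda>z. z ^ k)"
  unfolding bounded_holomorphic_def
  by (auto intro!: holomorphic_intros exI[of _ 1] simp: norm_power power_le_one)

lemma bounded_holomorphic_imp_bergman_space: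
  "\<beta> > -1 \<Longrightarrow> bounded_holomorphic f \<Longrightarrow> f \<in> bergman_space \<beta>"
  unfolding bounded_holomorphic_def using bergman_space_if_norm_le by blast

section \<open>Approximate coboundaries\<close>

lemma sum_funpow_telescope:
  fixes u :: "'a \<Rightarrow> 'b::ab_group_add"
  shows "(\<Sum>j<n. u ((\<phi> ^^ j) (\<phi> z))) - (\<Sum>j<n. u ((\<phi> ^^ j) z)) = u ((\<phi> ^^ n) z) - u z"
proof -
  have "(\<Sum>j<n. u ((\<phi> ^^ j) (\<phi> z))) = (\<Sum>j<n. u ((\<phi> ^^ Suc j) z))"
    by (simp add: funpow_Suc_right del: funpow.simps)
  then show ?thesis
    using sum_lessThan_telescope[of "\<lambda>j. u ((\<phi> ^^ j) z)" n] by (simp add: sum_subtractf)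
qed

lemma holomorphic_self_map_funpow:
  assumes "\<phi> holomorphic_on ball 0 1" "\<phi> ` ball 0 1 \<subseteq> ball 0 1"
  shows "(\<phi> ^^ n) holomorphic_on ball 0 1 \<and> (\<phi> ^^ n) ` ball 0 1 \<subseteq> ball 0 1"
proof (induction n)
  case 0
  then show ?case by (simp add: id_def)
next
  case (Suc n)
  then have "(\<phi> \<circ> \<phi> ^^ n) holomorphic_on ball 0 1"
    by (intro holomorphic_on_compose_gen[OF _ assms(1)]) auto
  moreover have "(\<phi> \<circ> \<phi> ^^ n) ` ball 0 1 \<subseteq> ball 0 1"
    using Suc assms(2) by auto
  ultimately show ?case
    by (simp only: funpow.simps(2))
qed

definition approx_coboundary :: "real \<Rightarrow> (complex \<Rightarrow> complex) \<Rightarrow> (complex \<Rightarrow> complex) \<Rightarrow> bool" where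
  "approx_coboundary \<beta> \<phi> h \<longleftrightarrow> h \<in> bergman_space \<beta> \<and>
     (\<forall>\<delta>>0. \<exists>g. bounded_holomorphic g \<and> bergman_norm2 \<beta> (\<lambda>z. g (\<phi> z) - g z - h z) < \<delta>)"

context
  fixes \<beta> :: real and \<phi> :: "complex \<Rightarrow> complex"
  assumes \<beta>: "\<beta> > -1" and \<phi>: "\<phi> holomorphic_on ball 0 1" "\<phi> ` ball 0 1 \<subseteq> ball 0 1"
begin

lemma coboundary_error_in_bergman_space:
  assumes "bounded_holomorphic g" "h \<in> bergman_space \<beta>"
  shows "(\<lambda>z. g (\<phi> z) - g z - h z) \<in> bergman_space \<beta>"
proof -
  have "(\<lambda>z. g (\<phi> z)) \<in> bergman_space \<beta>" "g \<in> bergman_space \<beta>"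
    using assms(1)
    by (auto intro: bounded_holomorphic_imp_bergman_space[OF \<beta>] bounded_holomorphic_compose[OF _ \<phi>])
  then have "(\<lambda>z. g (\<phi> z) - g z) \<in> bergman_space \<beta>"
    by (rule bergman_space_diff[OF \<beta>])
  then show ?thesis
    using assms(2) by (rule bergman_space_diff[OF \<beta>])
qed

lemma approx_coboundary_zero: "approx_coboundary \<beta> \<phi> (\<lambda>z. 0)"
  unfolding approx_coboundary_def
  using bounded_holomorphic_const[of 0] bounded_holomorphic_imp_bergman_space[OF \<beta>]
  by (auto simp: bergman_norm2_def taylor_coeff_const)

lemma approx_coboundary_add:
  assumes h1: "approx_coboundary \<beta> \<phi> h1" and h2: "approx_coboundary \<beta> \<phi> h2"
  shows "approx_coboundary \<beta> \<phi> (\<lambda>z. h1 z + h2 z)"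
  unfolding approx_coboundary_def
proof (intro conjI allI impI)
  have h1': "h1 \<in> bergman_space \<beta>" and h2': "h2 \<in> bergman_space \<beta>"
    using h1 h2 unfolding approx_coboundary_def by auto
  then show "(\<lambda>z. h1 z + h2 z) \<in> bergman_space \<beta>"
    by (rule bergman_space_add(1)[OF \<beta>])
  fix \<delta> :: real assume "\<delta> > 0"
  then obtain g1 g2 where g: "bounded_holomorphic g1" "bounded_holomorphic g2"
    and "bergman_norm2 \<beta> (\<lambda>z. g1 (\<phi> z) - g1 z - h1 z) < \<delta> / 4"
    and "bergman_norm2 \<beta> (\<lambda>z. g2 (\<phi> z) - g2 z - h2 z) < \<delta> / 4"
    using h1 h2 unfolding approx_coboundary_def by (meson divide_pos_pos zero_less_numeral)
  moreover have "bergman_norm2 \<beta> (\<lambda>z. (g1 (\<phi> z) + g2 (\<phi> z)) - (g1 z + g2 z) - (h1 z + h2 z))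
      \<le> 2 * bergman_norm2 \<beta> (\<lambda>z. g1 (\<phi> z) - g1 z - h1 z)
        + 2 * bergman_norm2 \<beta> (\<lambda>z. g2 (\<phi> z) - g2 z - h2 z)"
    using bergman_space_add(2)[OF \<beta> coboundary_error_in_bergman_space[OF g(1) h1']
        coboundary_error_in_bergman_space[OF g(2) h2']]
    by (simp add: algebra_simps)
  ultimately show "\<exists>g. bounded_holomorphic g \<and> bergman_norm2 \<beta> (\<lambda>z. g (\<phi> z) - g z - (h1 z + h2 z)) < \<delta>"
    by (intro exI[of _ "\<lambda>z. g1 z + g2 z"] conjI bounded_holomorphic_add) auto
qed

lemma approx_coboundary_cmult:
  assumes h: "approx_coboundary \<beta> \<phi> h"
  shows "approx_coboundary \<beta> \<phi> (\<lambda>z. c * h z)"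
  unfolding approx_coboundary_def
proof (intro conjI allI impI)
  have h': "h \<in> bergman_space \<beta>"
    using h unfolding approx_coboundary_def by auto
  then show "(\<lambda>z. c * h z) \<in> bergman_space \<beta>"
    by (rule bergman_space_cmult(1))
  fix \<delta> :: real assume "\<delta> > 0"
  have c: "(cmod c)\<^sup>2 + 1 > 0"
    by (rule add_nonneg_pos) auto
  obtain g where g: "bounded_holomorphic g"
    and err: "bergman_norm2 \<beta> (\<lambda>z. g (\<phi> z) - g z - h z) < \<delta> / ((cmod c)\<^sup>2 + 1)"
    using h \<open>\<delta> > 0\<close> c unfolding approx_coboundary_def by (meson divide_pos_pos)
  have "bergman_norm2 \<beta> (\<lambda>z. c * g (\<phi> z) - c * g z - c * h z)
      = (cmod c)\<^sup>2 * bergman_norm2 \<beta> (\<lambda>z. g (\<phi> z) - g z - h z)"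
    using bergman_space_cmult(2)[OF coboundary_error_in_bergman_space[OF g h'], of c]
    by (simp add: algebra_simps)
  also have "\<dots> \<le> (cmod c)\<^sup>2 * (\<delta> / ((cmod c)\<^sup>2 + 1))"
    using err by (intro mult_left_mono) auto
  also have "\<dots> = \<delta> * ((cmod c)\<^sup>2 / ((cmod c)\<^sup>2 + 1))"
    by simp
  also have "\<dots> < \<delta> * 1"
    using \<open>\<delta> > 0\<close> c by (intro mult_strict_left_mono) (auto simp: divide_less_eq)
  finally show "\<exists>g. bounded_holomorphic g \<and> bergman_norm2 \<beta> (\<lambda>z. g (\<phi> z) - g z - c * h z) < \<delta>"
    using bounded_holomorphic_cmult[OF g, of c] by (intro exI[of _ "\<lambda>z. c * g z"]) auto
qed

lemma approx_coboundary_sum: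
  "finite I \<Longrightarrow> (\<And>i. i \<in> I \<Longrightarrow> approx_coboundary \<beta> \<phi> (f i))
    \<Longrightarrow> approx_coboundary \<beta> \<phi> (\<lambda>z. \<Sum>i\<in>I. f i z)"
  by (induction I rule: finite_induct) (auto intro: approx_coboundary_zero approx_coboundary_add)

lemma approx_coboundary_closed:
  assumes h: "h \<in> bergman_space \<beta>"
    and approx: "\<And>\<delta>. \<delta> > 0 \<Longrightarrow> \<exists>h'. approx_coboundary \<beta> \<phi> h' \<and> bergman_norm2 \<beta> (\<lambda>z. h z - h' z) < \<delta>"
  shows "approx_coboundary \<beta> \<phi> h"
  unfolding approx_coboundary_def
proof (intro conjI allI impI h)
  fix \<delta> :: real assume "\<delta> > 0"
  then obtain h' where h': "approx_coboundary \<beta> \<phi> h'" "bergman_norm2 \<beta> (\<lambda>z. h z - h' z) < \<delta> / 4"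
    using approx[of "\<delta> / 4"] by auto
  then have h'_space: "h' \<in> bergman_space \<beta>"
    unfolding approx_coboundary_def by auto
  obtain g where g: "bounded_holomorphic g" "bergman_norm2 \<beta> (\<lambda>z. g (\<phi> z) - g z - h' z) < \<delta> / 4"
    using h'(1) \<open>\<delta> > 0\<close> unfolding approx_coboundary_def by (meson divide_pos_pos zero_less_numeral)
  have "bergman_norm2 \<beta> (\<lambda>z. g (\<phi> z) - g z - h z)
      \<le> 2 * bergman_norm2 \<beta> (\<lambda>z. g (\<phi> z) - g z - h' z) + 2 * bergman_norm2 \<beta> (\<lambda>z. h' z - h z)"
    using bergman_space_add(2)[OF \<beta> coboundary_error_in_bergman_space[OF g(1) h'_space]
        bergman_space_diff[OF \<beta> h'_space h]]
    by (simp add: algebra_simps)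
  also have "bergman_norm2 \<beta> (\<lambda>z. h' z - h z) = bergman_norm2 \<beta> (\<lambda>z. h z - h' z)"
    using h h'_space unfolding bergman_space_def by (intro bergman_norm2_minus_commute) auto
  finally show "\<exists>g. bounded_holomorphic g \<and> bergman_norm2 \<beta> (\<lambda>z. g (\<phi> z) - g z - h z) < \<delta>"
    using g h'(2) by auto
qed

context
  fixes \<omega> :: complex
  assumes \<omega>: "denjoy_wolff_point \<phi> \<omega>" "cmod \<omega> = 1"
begin

lemma bergman_norm2_iterate_power_tendsto_zero:
  "(\<lambda>n. bergman_norm2 \<beta> (\<lambda>z. \<omega> ^ k - ((\<phi> ^^ n) z) ^ k)) \<longlonglongrightarrow> 0"
proof (rule bergman_norm2_tendsto_zero[OF \<beta>])
  show "(\<lambda>z. \<omega> ^ k - ((\<phi> ^^ n) z) ^ k) holomorphic_on ball 0 1" for n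
    using holomorphic_self_map_funpow[OF \<phi>, of n] by (auto intro!: holomorphic_intros)
  show "cmod (\<omega> ^ k - ((\<phi> ^^ n) z) ^ k) \<le> 2" if "z \<in> ball 0 1" for n z
  proof -
    have "(\<phi> ^^ n) z \<in> ball 0 1"
      using holomorphic_self_map_funpow[OF \<phi>, of n] that by blast
    then have "cmod (((\<phi> ^^ n) z) ^ k) \<le> 1"
      by (simp add: norm_power power_le_one)
    then show ?thesis
      using \<omega>(2) norm_triangle_ineq4[of "\<omega> ^ k" "((\<phi> ^^ n) z) ^ k"] by (simp add: norm_power)
  qed
  show "(\<lambda>n. \<omega> ^ k - ((\<phi> ^^ n) z) ^ k) \<longlonglongrightarrow> 0" if "z \<in> ball 0 1" for z
  proof -
    have "(\<lambda>n. (\<phi> ^^ n) z) \<longlonglongrightarrow> \<omega>"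
      using \<omega>(1) that unfolding denjoy_wolff_point_def by blast
    then have "(\<lambda>n. \<omega> ^ k - ((\<phi> ^^ n) z) ^ k) \<longlonglongrightarrow> \<omega> ^ k - \<omega> ^ k"
      by (intro tendsto_intros)
    then show ?thesis
      by simp
  qed
qed

lemma approx_coboundary_monomial: "approx_coboundary \<beta> \<phi> (\<lambda>z. z ^ k - \<omega> ^ k)"
  unfolding approx_coboundary_def
proof (intro conjI allI impI)
  show "(\<lambda>z. z ^ k - \<omega> ^ k) \<in> bergman_space \<beta>"
    by (intro bergman_space_diff[OF \<beta>] bounded_holomorphic_imp_bergman_space[OF \<beta>]
        bounded_holomorphic_power bounded_holomorphic_const)
  fix \<delta> :: real assume "\<delta> > 0"
  then have "eventually (\<lambda>n. bergman_norm2 \<beta> (\<lambda>z. \<omega> ^ k - ((\<phi> ^^ n) z) ^ k) < \<delta>) sequentially"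
    by (rule order_tendstoD(2)[OF bergman_norm2_iterate_power_tendsto_zero])
  then obtain n where n: "bergman_norm2 \<beta> (\<lambda>z. \<omega> ^ k - ((\<phi> ^^ n) z) ^ k) < \<delta>"
    by (auto simp: eventually_sequentially)
  define g where "g z = (-1) * (\<Sum>j<n. ((\<phi> ^^ j) z) ^ k)" for z
  have "bounded_holomorphic (\<lambda>z. ((\<phi> ^^ j) z) ^ k)" for j
    using holomorphic_self_map_funpow[OF \<phi>, of j]
    by (auto intro: bounded_holomorphic_compose[OF bounded_holomorphic_power])
  then have "bounded_holomorphic g"
    unfolding g_def by (intro bounded_holomorphic_cmult bounded_holomorphic_sum) auto
  moreover have "(\<lambda>z. g (\<phi> z) - g z - (z ^ k - \<omega> ^ k)) = (\<lambda>z. \<omega> ^ k - ((\<phi> ^^ n) z) ^ k)"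
  proof
    fix z
    show "g (\<phi> z) - g z - (z ^ k - \<omega> ^ k) = \<omega> ^ k - ((\<phi> ^^ n) z) ^ k"
      using sum_funpow_telescope[where u="\<lambda>w. w ^ k" and n=n and z=z] by (simp add: g_def algebra_simps)
  qed
  ultimately show "\<exists>g. bounded_holomorphic g \<and> bergman_norm2 \<beta> (\<lambda>z. g (\<phi> z) - g z - (z ^ k - \<omega> ^ k)) < \<delta>"
    using n by auto
qed

lemma approx_coboundary_one: "approx_coboundary \<beta> \<phi> (\<lambda>z. 1)"
proof (rule approx_coboundary_closed)
  show "(\<lambda>z. 1) \<in> bergman_space \<beta>"
    by (intro bounded_holomorphic_imp_bergman_space[OF \<beta>] bounded_holomorphic_const)
  fix \<delta> :: real assume "\<delta> > 0"
  then obtain K :: nat where K: "K > 0" "inverse (real K) < \<delta>"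
    using ex_inverse_of_nat_less by blast
  define c where "c k = cnj \<omega> ^ k / of_nat K" for k
  define h where "h z = (\<Sum>k\<in>{1..K}. (- c k) * (z ^ k - \<omega> ^ k))" for z
  have "approx_coboundary \<beta> \<phi> h"
    unfolding h_def[abs_def]
    by (intro approx_coboundary_sum approx_coboundary_cmult
        approx_coboundary_monomial finite_atLeastAtMost)
  moreover have "(\<lambda>z. 1 - h z) = (\<lambda>z. \<Sum>k\<in>{1..K}. c k * z ^ k)"
  proof
    fix z
    have "cnj \<omega> ^ k * \<omega> ^ k = 1" for k
      using \<omega>(2) complex_norm_square[of \<omega>] by (simp flip: power_mult_distrib add: mult.commute)
    then have "(\<Sum>k\<in>{1..K}. c k * \<omega> ^ k) = 1"
      using K(1) by (simp add: c_def)
    then show "1 - h z = (\<Sum>k\<in>{1..K}. c k * z ^ k)"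
      by (simp add: h_def algebra_simps sum.distrib sum_subtractf)
  qed
  moreover have "bergman_norm2 \<beta> (\<lambda>z. \<Sum>k\<in>{1..K}. c k * z ^ k) \<le> inverse (real K)"
  proof -
    have "bergman_norm2 \<beta> (\<lambda>z. \<Sum>k\<in>{1..K}. c k * z ^ k)
        = (\<Sum>k\<in>{1..K}. bergman_weight \<beta> k * (inverse (real K))\<^sup>2)"
      using \<omega>(2) by (simp add: bergman_norm2_polynomial c_def norm_mult norm_power norm_inverse divide_inverse)
    also have "\<dots> \<le> (\<Sum>k\<in>{1..K}. (inverse (real K))\<^sup>2)"
      by (intro sum_mono mult_left_le_one_le bergman_weight_le_one[OF \<beta>]
          less_imp_le[OF bergman_weight_pos[OF \<beta>]]) auto
    also have "\<dots> = inverse (real K)"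
      using K(1) by (simp add: power2_eq_square)
    finally show ?thesis .
  qed
  ultimately show "\<exists>h'. approx_coboundary \<beta> \<phi> h' \<and> bergman_norm2 \<beta> (\<lambda>z. 1 - h' z) < \<delta>"
    using K(2) by (intro exI[of _ h]) auto
qed

lemma approx_coboundary_polynomial: "approx_coboundary \<beta> \<phi> (\<lambda>z. \<Sum>k<K. c k * z ^ k)"
proof -
  have "approx_coboundary \<beta> \<phi> (\<lambda>z. \<Sum>k<K. c k * (z ^ k - \<omega> ^ k) + (c k * \<omega> ^ k) * 1)"
    by (intro approx_coboundary_sum approx_coboundary_add
        approx_coboundary_cmult approx_coboundary_monomial
        approx_coboundary_one finite_lessThan)
  then show ?thesis
    by (simp add: algebra_simps)
qed

lemma approx_coboundary_bergman_space:
  assumes f: "f \<in> bergman_space \<beta>"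
  shows "approx_coboundary \<beta> \<phi> f"
proof (rule approx_coboundary_closed[OF f])
  fix \<delta> :: real assume "\<delta> > 0"
  then obtain K where "bergman_norm2 \<beta> (\<lambda>z. f z - (\<Sum>k<K. taylor_coeff f k * z ^ k)) < \<delta>"
    using order_tendstoD(2)[OF bergman_norm2_taylor_remainder_tendsto_zero[OF f]]
    by (meson eventually_sequentially order.refl)
  then show "\<exists>h'. approx_coboundary \<beta> \<phi> h' \<and> bergman_norm2 \<beta> (\<lambda>z. f z - h' z) < \<delta>"
    using approx_coboundary_polynomial by blast
qed

end

end

theorem corollary2p4:
  fixes \<beta> :: real and \<phi> :: "complex \<Rightarrow> complex" and \<omega> :: complex
  assumes "\<beta> > -1"
    and "\<phi> holomorphic_on ball 0 1" and "\<phi> ` ball 0 1 \<subseteq> ball 0 1"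
    and "denjoy_wolff_point \<phi> \<omega>" and "cmod \<omega> = 1"
  shows "\<forall>f\<in>bergman_space \<beta>. \<forall>\<epsilon>>0. \<exists>g\<in>bergman_space \<beta>.
           bergman_norm2 \<beta> (\<lambda>z. (g (\<phi> z) - g z) - f z) < \<epsilon>"
proof (intro ballI allI impI)
  fix f and \<epsilon> :: real
  assume "f \<in> bergman_space \<beta>" "\<epsilon> > 0"
  then obtain g where "bounded_holomorphic g" "bergman_norm2 \<beta> (\<lambda>z. g (\<phi> z) - g z - f z) < \<epsilon>"
    using approx_coboundary_bergman_space[OF assms] unfolding approx_coboundary_def by blast
  then show "\<exists>g\<in>bergman_space \<beta>. bergman_norm2 \<beta> (\<lambda>z. (g (\<phi> z) - g z) - f z) < \<epsilon>"
    using bounded_holomorphic_imp_bergman_space[OF assms(1)] by blast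
qed

end
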